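(* Let $\mu=(p,q,r,s)\in\mathbb{R}^4$ with $(p,q,r)\neq(0,0,0)$, and let $\alpha=\max\{|p|,|q|,|r|\}/2$. There exists a $\mu$-Markoff map $\phi\in\Phi_\mu$ such that $\Omega_\phi(2+\alpha)=\{X\in\Omega:|\phi(X)|\le 2+\alpha\}$ is finite.
   Context: Let $\Sigma$ be a countably infinite simplicial tree, properly embedded in the plane, all of whose vertices have degree $3$. A complementary region is the closure of a connected component of the complement of $\Sigma$; $\Omega$ is the set of complementary regions, $E(\Sigma)$ the set of edges. Every edge $e$ is the intersection of exactly two regions $X,Y$, and its two endpoints lie on two further regions $Z,W$ respectively; write $e\leftrightarrow(X,Y;Z,W)$. Three regions meet at each vertex. Fix a coloring $\mathcal C:\Omega\cup E(\Sigma)\to\{1,2,3\}$ such that for every $e\leftrightarrow(X,Y;Z,W)$, $\mathcal C(e)=\mathcal C(Z)=\mathcal C(W)$ and $\mathcal C(e),\mathcal C(X),\mathcal C(Y)$ are pairwise distinct; $\Omega_i$, $E_i$ denote regions/edges of color $i$. For $\mu=(p,q,r,s)$, a $\mu$-Markoff map is $\phi:\Omega\to\mathbb{C}$ such that (i) at every vertex with regions $X\in\Omega_1,Y\in\Omega_2,Z\in\Omega_3$, $x^2+y^2+z^2+xyz=px+qy+rz+s$ where $x=\phi(X)$, etc.; (ii) for $e\in E_1$, $e\leftrightarrow(Y,Z;X,X')$: $\phi(X)+\phi(X')=p-\phi(Y)\phi(Z)$; for $e\in E_2$, $e\leftrightarrow(X,Z;Y,Y')$: $\phi(Y)+\phi(Y')=q-\phi(X)\phi(Z)$;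 for $e\in E_3$, $e\leftrightarrow(X,Y;Z,Z')$: $\phi(Z)+\phi(Z')=r-\phi(X)\phi(Y)$. $\Phi_\mu$ is the set of such maps. *)

theory Defs
  imports Complex_Main "HOL-Computational_Algebra.Primes"
begin

text \<open>Concrete combinatorial model of the trivalent planar tree Sigma (the dual tree of
the Farey tessellation). Complementary regions are the points of the rational projective
line, represented by coprime integer pairs (a,b) normalised by b > 0, or (a,b) = (1,0).
Two regions share an edge iff |ad - bc| = 1. The edge between X=(a,b) and Y=(c,d) has
its two endpoints on the further regions Z = [a+c : b+d] and W = [a-c : b-d].\<close>

type_synonym region = "int \<times> int"

definition Omega :: "region set" where
  "Omega = {(a, b). coprime a b \<and> (0 < b \<or> (b = 0 \<and> a = 1))}"

definition adj :: "region \<Rightarrow> region \<Rightarrow> bool" where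
  "adj X Y \<longleftrightarrow> \<bar>fst X * snd Y - snd X * fst Y\<bar> = 1"

definition normr :: "region \<Rightarrow> region" where
  "normr X = (if snd X < 0 \<or> (snd X = 0 \<and> fst X < 0) then (- fst X, - snd X) else X)"

definition radd :: "region \<Rightarrow> region \<Rightarrow> region" where
  "radd X Y = normr (fst X + fst Y, snd X + snd Y)"

definition rsub :: "region \<Rightarrow> region \<Rightarrow> region" where
  "rsub X Y = normr (fst X - fst Y, snd X - snd Y)"

definition Edges :: "region set set" where
  "Edges = {{X, Y} | X Y. X \<in> Omega \<and> Y \<in> Omega \<and> adj X Y}"

definition edge_rel :: "region set \<Rightarrow> region \<Rightarrow> region \<Rightarrow> region \<Rightarrow> region \<Rightarrow> bool" where
  "edge_rel e X Y Z W \<longleftrightarrow> X \<in> Omega \<and> Y \<in> Omega \<and> adj X Y \<and> e = {X, Y}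
      \<and> Z = radd X Y \<and> W = rsub X Y"

text \<open>X, Y, Z are the three regions meeting at a vertex (an endpoint of the edge X \<inter> Y).\<close>
definition at_vertex :: "region \<Rightarrow> region \<Rightarrow> region \<Rightarrow> bool" where
  "at_vertex X Y Z \<longleftrightarrow> (\<exists>e W. edge_rel e X Y Z W \<or> edge_rel e X Y W Z)"

definition valid_coloring :: "(region \<Rightarrow> nat) \<Rightarrow> (region set \<Rightarrow> nat) \<Rightarrow> bool" where
  "valid_coloring Cr Ce \<longleftrightarrow>
     (\<forall>X\<in>Omega. Cr X \<in> {1, 2, 3}) \<and> (\<forall>e\<in>Edges. Ce e \<in> {1, 2, 3}) \<and>
     (\<forall>e X Y Z W. edge_rel e X Y Z W \<longrightarrow>
        Ce e = Cr Z \<and> Ce e = Cr W \<and> Ce e \<noteq> Cr X \<and> Ce e \<noteq> Cr Y \<and> Cr X \<noteq> Cr Y)"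

definition markoff_map ::
  "(region \<Rightarrow> nat) \<Rightarrow> (region set \<Rightarrow> nat) \<Rightarrow> complex \<Rightarrow> complex \<Rightarrow> complex \<Rightarrow> complex
     \<Rightarrow> (region \<Rightarrow> complex) \<Rightarrow> bool" where
  "markoff_map Cr Ce p q r s \<phi> \<longleftrightarrow>
     (\<forall>X Y Z. at_vertex X Y Z \<and> Cr X = 1 \<and> Cr Y = 2 \<and> Cr Z = 3 \<longrightarrow>
        (\<phi> X)\<^sup>2 + (\<phi> Y)\<^sup>2 + (\<phi> Z)\<^sup>2 + \<phi> X * \<phi> Y * \<phi> Z = p * \<phi> X + q * \<phi> Y + r * \<phi> Z + s) \<and>
     (\<forall>e X Y Z W. edge_rel e X Y Z W \<and> Ce e = 1 \<longrightarrow> \<phi> Z + \<phi> W = p - \<phi> X * \<phi> Y) \<and>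
     (\<forall>e X Y Z W. edge_rel e X Y Z W \<and> Ce e = 2 \<longrightarrow> \<phi> Z + \<phi> W = q - \<phi> X * \<phi> Y) \<and>
     (\<forall>e X Y Z W. edge_rel e X Y Z W \<and> Ce e = 3 \<longrightarrow> \<phi> Z + \<phi> W = r - \<phi> X * \<phi> Y)"

end

theory Submission
  imports Defs
begin

text \<open>Regions are the points of \<open>\<rat> \<union> {\<infinity>}\<close>, adjacent when they are Farey neighbours.
  Put \<open>\<phi> \<infinity> = \<lambda>\<close> with \<open>cmod \<lambda> \<le> 2\<close> and choose the values \<open>c k\<close> of \<open>\<phi>\<close> on the neighbours
  \<open>k/1\<close> of \<open>\<infinity>\<close> as an explicit solution of the edge recurrence around \<open>\<infinity>\<close> that also satisfies
  the vertex relation, with \<open>cmod (c k) \<ge> M = 3 + \<bar>p\<bar> + \<bar>q\<bar> + \<bar>r\<bar>\<close> and \<open>cmod (c k)\<close> growing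
  linearly in \<open>k\<close>. Every other region \<open>a/b\<close> is the Farey sum \<open>X \<oplus> Y\<close> (\<open>radd\<close>) of two unique parents
  of smaller denominator, and the edge relation \<open>\<phi> (X \<oplus> Y) = g - \<phi> X \<phi> Y - \<phi> (X \<ominus> Y)\<close>
  (with \<open>X \<ominus> Y = rsub X Y\<close>) defines \<open>\<phi>\<close> by recursion on \<open>b\<close>. The vertex relations propagate from \<open>\<infinity>\<close> because
  \<open>\<phi> (X \<oplus> Y)\<close> and \<open>\<phi> (X \<ominus> Y)\<close> are the two roots of the same quadratic. Finally
  \<open>cmod (\<phi> (X \<ominus> Y)) \<le> max (cmod (\<phi> X)) (cmod (\<phi> Y))\<close> and \<open>cmod (\<phi> X), cmod (\<phi> Y) \<ge> M\<close> give
  \<open>cmod (\<phi> (X \<oplus> Y)) \<ge> cmod (\<phi> X) + cmod (\<phi> Y)\<close>, so \<open>cmod (\<phi> (a/b))\<close> grows linearly in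
  \<open>\<bar>a\<bar> + b\<close> and only finitely many regions have \<open>cmod \<phi>\<close> below any bound.\<close>

lemma coprime_if_det_unit:
  fixes a b c d :: int
  assumes "\<bar>a * d - b * c\<bar> = 1"
  shows "coprime a b"
proof (rule coprimeI)
  fix k assume "k dvd a" "k dvd b"
  then have "k dvd a * d - b * c" by simp
  then have "k dvd \<bar>a * d - b * c\<bar>" by simp
  then show "is_unit k" using assms by simp
qed

lemma dvd_eq_zero_if_abs_less:
  fixes b d :: int
  assumes "b dvd d" "\<bar>d\<bar> < b"
  shows "d = 0"
  using assms dvd_imp_le_int[of d b] by force

lemma dvd_eq_if_between:
  fixes b d :: int
  assumes "b dvd d" "0 < d" "d < 2 * b"
  shows "d = b"
proof -
  obtain k where k: "d = b * k" using assms(1) by blast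
  with assms have "0 < k" "k < 2" by (auto simp: zero_less_mult_iff)
  then show ?thesis using k by simp
qed

lemma sum_le_prod_minus:
  fixes a b c d M C :: real
  assumes "M \<le> a" "M \<le> b" "c \<le> max a b" "d \<le> C" "3 + C \<le> M" "0 \<le> C"
  shows "a + b \<le> a * b - c - d"
proof -
  have *: "x + y \<le> x * y - c - d" if "y \<le> x" "M \<le> y" "c \<le> x" for x y
  proof -
    have "y * (y - 2) \<le> x * (y - 2)" using that assms by (intro mult_right_mono) auto
    moreover have "1 * C \<le> y * (y - 3)" using that assms by (intro mult_mono) auto
    ultimately show ?thesis using that assms by (simp add: algebra_simps)
  qed
  show ?thesis
  proof (cases "b \<le> a")
    case True
    then show ?thesis using * assms by simp
  next
    case False
    then show ?thesis using *[of a b] assms by (simp add: mult.commute)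
  qed
qed

lemma norm_add_diff_ge:
  fixes a b c :: "'a::real_normed_vector"
  shows "norm a - norm b - norm c \<le> norm (a + b - c)"
proof -
  have "norm a = norm ((a + b - c) - b + c)" by simp
  also have "\<dots> \<le> norm ((a + b - c) - b) + norm c" by (rule norm_triangle_ineq)
  also have "\<dots> \<le> norm (a + b - c) + norm b + norm c" by (intro add_right_mono norm_triangle_ineq4)
  finally show ?thesis by simp
qed

section \<open>Farey combinatorics of the regions\<close>

lemma Omega_iff: "(a, b) \<in> Omega \<longleftrightarrow> coprime a b \<and> (0 < b \<or> (b = 0 \<and> a = 1))"
  by (simp add: Omega_def)

lemma infinity_in_Omega: "(1, 0) \<in> Omega"
  by (simp add: Omega_iff)

lemma integer_in_Omega: "(k, 1) \<in> Omega"
  by (simp add: Omega_iff)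

lemma Omega_snd_nonneg: "X \<in> Omega \<Longrightarrow> 0 \<le> snd X"
  by (cases X) (auto simp: Omega_iff)

lemma Omega_snd_pos: "X \<in> Omega \<Longrightarrow> X \<noteq> (1, 0) \<Longrightarrow> 1 \<le> snd X"
  by (cases X) (auto simp: Omega_iff)

lemma adj_sym: "adj X Y \<longleftrightarrow> adj Y X"
  by (simp add: adj_def abs_minus_commute mult.commute)

lemma adj_imp_neq: "adj X Y \<Longrightarrow> X \<noteq> Y"
  by (auto simp: adj_def)

lemma adj_infinity: "X \<in> Omega \<Longrightarrow> adj (1, 0) X \<Longrightarrow> snd X = 1"
  using Omega_snd_nonneg[of X] by (cases X) (auto simp: adj_def)

lemma radd_comm: "radd X Y = radd Y X"
  by (simp add: radd_def add.commute)

lemma rsub_comm: "adj X Y \<Longrightarrow> rsub Y X = rsub X Y"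
  using adj_imp_neq[of X Y] by (cases X, cases Y) (auto simp: rsub_def normr_def)

lemma radd_finite: "1 \<le> snd X \<Longrightarrow> 1 \<le> snd Y \<Longrightarrow> radd X Y = (fst X + fst Y, snd X + snd Y)"
  by (simp add: radd_def normr_def)

lemma radd_infinity: "radd (1, 0) (k, 1) = (k + 1, 1)"
  by (simp add: radd_def normr_def)

lemma rsub_infinity: "rsub (1, 0) (k, 1) = (k - 1, 1)"
  by (simp add: rsub_def normr_def)

definition farey_parents :: "region \<Rightarrow> region \<Rightarrow> region \<Rightarrow> bool" where
  "farey_parents w X Y \<longleftrightarrow> X \<in> Omega \<and> Y \<in> Omega \<and> 1 \<le> snd X \<and> 1 \<le> snd Y \<and> adj X Y \<and>
     fst X + fst Y = fst w \<and> snd X + snd Y = snd w"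

lemma farey_parents_sym: "farey_parents w X Y \<Longrightarrow> farey_parents w Y X"
  by (auto simp: farey_parents_def adj_sym)

lemma farey_parents_snd_less: "farey_parents w X Y \<Longrightarrow> snd X < snd w \<and> snd Y < snd w"
  by (simp add: farey_parents_def)

lemma radd_farey_parents: "farey_parents w X Y \<Longrightarrow> radd X Y = w"
  by (simp add: farey_parents_def radd_finite)

lemma farey_parents_radd:
  assumes "X \<in> Omega" "Y \<in> Omega" "adj X Y" "1 \<le> snd X" "1 \<le> snd Y"
  shows "radd X Y \<in> Omega" "farey_parents (radd X Y) X Y"
proof -
  obtain x1 x2 y1 y2 where XY: "X = (x1, x2)" "Y = (y1, y2)" by fastforce
  have "\<bar>(x1 + y1) * y2 - (x2 + y2) * y1\<bar> = 1"
    using assms(3) by (simp add: XY adj_def algebra_simps)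
  then have "coprime (x1 + y1) (x2 + y2)" by (rule coprime_if_det_unit)
  then show "radd X Y \<in> Omega" using assms by (simp add: XY radd_finite Omega_iff)
  show "farey_parents (radd X Y) X Y" using assms by (simp add: farey_parents_def radd_finite)
qed

text \<open>A parent \<open>(x1, x2)\<close> of \<open>(a, b)\<close> satisfies \<open>x1 * b - x2 * a = \<plusminus>1\<close> and \<open>0 < x2 < b\<close>;
  since \<open>a\<close> and \<open>b\<close> are coprime, this determines it up to swapping the two parents.\<close>
lemma farey_parents_unique:
  assumes w: "w \<in> Omega" and P: "farey_parents w X Y" and P': "farey_parents w X' Y'"
  shows "(X' = X \<and> Y' = Y) \<or> (X' = Y \<and> Y' = X)"
proof -
  obtain a b x1 x2 y1 y2 z1 z2 t1 t2
    where reg: "w = (a, b)" "X = (x1, x2)" "Y = (y1, y2)" "X' = (z1, z2)" "Y' = (t1, t2)"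
    by (metis prod.exhaust)
  have cop: "coprime b a" using w by (simp add: reg Omega_iff coprime_commute)
  have Y: "y1 = a - x1" "y2 = b - x2" and Y': "t1 = a - z1" "t2 = b - z2"
    using P P' by (auto simp: farey_parents_def reg)
  have pos: "1 \<le> x2" "1 \<le> y2" "1 \<le> z2" "1 \<le> t2"
    using P P' by (auto simp: farey_parents_def reg)
  have "\<bar>x1 * b - x2 * a\<bar> = 1" "\<bar>z1 * b - z2 * a\<bar> = 1"
    using P P' by (auto simp: farey_parents_def adj_def reg Y Y' algebra_simps)
  then consider "x1 * b - x2 * a = z1 * b - z2 * a" | "x1 * b - x2 * a = - (z1 * b - z2 * a)"
    by linarith
  then show ?thesis
  proof cases
    case 1
    then have eq: "(x2 - z2) * a = b * (x1 - z1)" by (simp add: algebra_simps)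
    then have "b dvd (x2 - z2)" using cop by (metis coprime_dvd_mult_left_iff dvd_triv_left)
    moreover have "\<bar>x2 - z2\<bar> < b" using pos Y Y' by linarith
    ultimately have "x2 = z2" using dvd_eq_zero_if_abs_less by fastforce
    moreover from this have "x1 = z1" using eq pos Y by simp
    ultimately show ?thesis by (simp add: reg Y Y')
  next
    case 2
    then have eq: "(x2 + z2) * a = b * (x1 + z1)" by (simp add: algebra_simps)
    then have "b dvd (x2 + z2)" using cop by (metis coprime_dvd_mult_left_iff dvd_triv_left)
    moreover have "0 < x2 + z2" "x2 + z2 < 2 * b" using pos Y Y' by linarith+
    ultimately have "x2 + z2 = b" by (rule dvd_eq_if_between)
    moreover from this have "x1 + z1 = a" using eq pos Y by simp
    ultimately show ?thesis by (auto simp: reg Y Y')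
  qed
qed

lemma farey_parents_exist:
  assumes w: "w \<in> Omega" and snd_w: "2 \<le> snd w"
  obtains X Y where "farey_parents w X Y"
proof -
  obtain a b where ab: "w = (a, b)" by fastforce
  have "gcd a b = 1" using w by (simp add: ab Omega_iff)
  then obtain u v where uv: "u * a + v * b = 1" using bezout_int[of a b] by auto
  define x2 where "x2 = u mod b"
  define x1 where "x1 = - v - a * (u div b)"
  have det: "x1 * (b - x2) - x2 * (a - x1) = -1"
  proof -
    have "x2 = u - b * (u div b)" by (simp add: x2_def minus_div_mult_eq_mod[symmetric])
    then show ?thesis using uv unfolding x1_def by algebra
  qed
  have "0 \<le> x2" "x2 < b" using snd_w by (simp_all add: ab x2_def)
  moreover have "x2 \<noteq> 0"
  proof
    assume "x2 = 0"
    then have "b dvd 1" using det by (metis add.inverse_inverse diff_zero dvd_minus_iff dvd_triv_right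
          mult_zero_left)
    then show False using snd_w by (simp add: ab zdvd_imp_le)
  qed
  ultimately have x2: "1 \<le> x2" "x2 < b" by simp_all
  have "coprime x1 x2" by (rule coprime_if_det_unit[of _ "b - x2" _ "a - x1"]) (simp add: det)
  moreover have "coprime (a - x1) (b - x2)"
    by (rule coprime_if_det_unit[of _ x2 _ x1]) (use det in \<open>simp add: algebra_simps\<close>)
  ultimately have "farey_parents w (x1, x2) (a - x1, b - x2)"
    using x2 det by (simp add: farey_parents_def ab Omega_iff adj_def)
  then show ?thesis by (rule that)
qed

lemma farey_parents_rsub:
  assumes "Y \<in> Omega" "adj X Y" "1 \<le> snd Y" "snd Y < snd X"
  shows "farey_parents X Y (rsub X Y)"
proof -
  obtain x1 x2 y1 y2 where XY: "X = (x1, x2)" "Y = (y1, y2)" by fastforce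
  have det: "\<bar>x1 * y2 - x2 * y1\<bar> = 1" using assms(2) by (simp add: XY adj_def)
  then have "\<bar>(x1 - y1) * y2 - (x2 - y2) * y1\<bar> = 1" by (simp add: algebra_simps)
  then have "coprime (x1 - y1) (x2 - y2)" by (rule coprime_if_det_unit)
  moreover have "rsub X Y = (x1 - y1, x2 - y2)" using assms by (simp add: XY rsub_def normr_def)
  ultimately show ?thesis
    using assms det by (simp add: XY farey_parents_def Omega_iff adj_def algebra_simps)
qed

lemma rsub_eq_infinity:
  assumes "adj X Y" "1 \<le> snd X" "snd X = snd Y"
  obtains k where "rsub X Y = (1, 0)" "X = (k, 1) \<and> Y = (k + 1, 1) \<or> X = (k + 1, 1) \<and> Y = (k, 1)"
proof -
  obtain x1 x2 y1 y2 where XY: "X = (x1, x2)" "Y = (y1, y2)" by fastforce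
  have "\<bar>x2 * (x1 - y1)\<bar> = 1"
    using assms by (simp add: XY adj_def algebra_simps)
  then have "x2 * \<bar>x1 - y1\<bar> = 1" using assms(2) by (simp add: XY abs_mult)
  then have "x2 = 1" "\<bar>x1 - y1\<bar> = 1" using assms(2) by (simp_all add: XY pos_zmult_eq_1_iff)
  then consider "x1 = y1 + 1" | "y1 = x1 + 1" by linarith
  then show ?thesis
  proof cases
    case 1
    then show ?thesis using that[of y1] assms(3) \<open>x2 = 1\<close> by (simp add: XY rsub_def normr_def)
  next
    case 2
    then show ?thesis using that[of x1] assms(3) \<open>x2 = 1\<close> by (simp add: XY rsub_def normr_def)
  qed
qed

lemma rsub_cases:
  assumes "X \<in> Omega" "Y \<in> Omega" "adj X Y" "1 \<le> snd X" "1 \<le> snd Y"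
  obtains k where "rsub X Y = (1, 0)" "X = (k, 1) \<and> Y = (k + 1, 1) \<or> X = (k + 1, 1) \<and> Y = (k, 1)"
    | "farey_parents X Y (rsub X Y)"
    | "farey_parents Y X (rsub X Y)"
proof -
  consider "snd X = snd Y" | "snd Y < snd X" | "snd X < snd Y" by linarith
  then show ?thesis
  proof cases
    case 1
    then show ?thesis using rsub_eq_infinity assms that(1) by metis
  next
    case 2
    then show ?thesis using farey_parents_rsub assms that(2) by blast
  next
    case 3
    then show ?thesis using farey_parents_rsub[of X Y] assms that(3) by (simp add: adj_sym rsub_comm)
  qed
qed

lemma farey_parents_induct [consumes 2, case_names integer parents]:
  assumes "w \<in> Omega" "1 \<le> snd w"
    and integer: "\<And>k. P (k, 1)"
    and parents: "\<And>w. w \<in> Omega \<Longrightarrow> 2 \<le> snd w \<Longrightarrow> (\<And>V U. farey_parents w V U \<Longrightarrow> P V) \<Longrightarrow> P w"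
  shows "P w"
  using assms(1,2)
proof (induction "nat (snd w)" arbitrary: w rule: less_induct)
  case less
  show ?case
  proof (cases "snd w = 1")
    case True
    then show ?thesis using integer by (metis prod.collapse)
  next
    case False
    show ?thesis
    proof (rule parents)
      show "w \<in> Omega" "2 \<le> snd w" using less.prems False by simp_all
    next
      fix V U assume P: "farey_parents w V U"
      then have "nat (snd V) < nat (snd w)" using farey_parents_snd_less[OF P]
        by (auto simp: farey_parents_def)
      from less.hyps[OF this] show "P V" using P by (simp add: farey_parents_def)
    qed
  qed
qed

section \<open>Extension of boundary values\<close>

definition parents :: "region \<Rightarrow> region \<times> region" where
  "parents w = (SOME (X, Y). farey_parents w X Y)"

lemma farey_parents_parents:
  assumes "w \<in> Omega" "2 \<le> snd w"
  shows "farey_parents w (fst (parents w)) (snd (parents w))"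
proof -
  obtain X Y where "farey_parents w X Y" using farey_parents_exist[OF assms] .
  then have "\<exists>XY. case XY of (X, Y) \<Rightarrow> farey_parents w X Y" by (intro exI[of _ "(X, Y)"]) simp
  then show ?thesis unfolding parents_def by (metis (mono_tags) case_prod_beta someI_ex)
qed

function farey_ext :: "(region \<Rightarrow> complex) \<Rightarrow> complex \<Rightarrow> (int \<Rightarrow> complex) \<Rightarrow> region \<Rightarrow> complex"
  where
  "farey_ext g lam c w =
    (if w \<in> Omega \<and> 2 \<le> snd w then
       g w - farey_ext g lam c (fst (parents w)) * farey_ext g lam c (snd (parents w))
         - farey_ext g lam c (rsub (fst (parents w)) (snd (parents w)))
     else if snd w = 1 then c (fst w) else lam)"
  by auto
termination
proof (relation "measure (\<lambda>(g, lam, c, w). nat (snd w))", goal_cases)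
  case (2 g lam c w)
  then show ?case using farey_parents_snd_less[OF farey_parents_parents] by simp
next
  case (3 g lam c w)
  then show ?case using farey_parents_snd_less[OF farey_parents_parents] by simp
next
  case (4 g lam c w)
  then have "farey_parents w (fst (parents w)) (snd (parents w))"
    by (simp add: farey_parents_parents)
  then show ?case by (auto simp: farey_parents_def rsub_def normr_def)
qed simp

declare farey_ext.simps [simp del]

lemma farey_ext_infinity: "farey_ext g lam c (1, 0) = lam"
  by (simp add: farey_ext.simps)

lemma farey_ext_integer: "farey_ext g lam c (k, 1) = c k"
  by (simp add: farey_ext.simps)

lemma farey_ext_farey_parents:
  assumes "w \<in> Omega" "farey_parents w X Y"
  shows "farey_ext g lam c w = g w - farey_ext g lam c X * farey_ext g lam c Y - farey_ext g lam c (rsub X Y)"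
proof -
  have "2 \<le> snd w" using assms(2) by (auto simp: farey_parents_def)
  then have "farey_parents w (fst (parents w)) (snd (parents w))"
    using assms(1) by (rule farey_parents_parents[rotated])
  then have "fst (parents w) = X \<and> snd (parents w) = Y \<or> fst (parents w) = Y \<and> snd (parents w) = X"
    using farey_parents_unique assms by blast
  moreover have "rsub Y X = rsub X Y" using assms(2) by (simp add: farey_parents_def rsub_comm)
  ultimately show ?thesis using assms(1) \<open>2 \<le> snd w\<close>
    by (subst farey_ext.simps) (auto simp: mult.commute)
qed

definition vertex_rel ::
  "(region \<Rightarrow> complex) \<Rightarrow> complex \<Rightarrow> (region \<Rightarrow> complex) \<Rightarrow> region \<Rightarrow> region \<Rightarrow> region \<Rightarrow> bool" where
  "vertex_rel g s \<phi> X Y Z \<longleftrightarrow>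
     (\<phi> X)\<^sup>2 + (\<phi> Y)\<^sup>2 + (\<phi> Z)\<^sup>2 + \<phi> X * \<phi> Y * \<phi> Z = g X * \<phi> X + g Y * \<phi> Y + g Z * \<phi> Z + s"

lemma vertex_rel_swap12: "vertex_rel g s \<phi> X Y Z \<longleftrightarrow> vertex_rel g s \<phi> Y X Z"
  unfolding vertex_rel_def by (simp add: algebra_simps)

lemma vertex_rel_swap23: "vertex_rel g s \<phi> X Y Z \<longleftrightarrow> vertex_rel g s \<phi> X Z Y"
  unfolding vertex_rel_def by (simp add: algebra_simps)

text \<open>Vieta: as a quadratic in \<open>\<phi> Z\<close>, the vertex relation has root sum \<open>g Z - \<phi> X * \<phi> Y\<close>.\<close>
lemma vertex_rel_flip:
  assumes "\<phi> Z + \<phi> W = g Z - \<phi> X * \<phi> Y" "g W = g Z"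
  shows "vertex_rel g s \<phi> X Y Z \<longleftrightarrow> vertex_rel g s \<phi> X Y W"
proof -
  have "(\<phi> X)\<^sup>2 + (\<phi> Y)\<^sup>2 + (\<phi> Z)\<^sup>2 + \<phi> X * \<phi> Y * \<phi> Z - (g X * \<phi> X + g Y * \<phi> Y + g Z * \<phi> Z + s)
      = (\<phi> X)\<^sup>2 + (\<phi> Y)\<^sup>2 + (\<phi> W)\<^sup>2 + \<phi> X * \<phi> Y * \<phi> W - (g X * \<phi> X + g Y * \<phi> Y + g W * \<phi> W + s)"
    using assms by algebra
  then show ?thesis unfolding vertex_rel_def by (metis eq_iff_diff_eq_0)
qed

definition colour_coeff :: "real \<Rightarrow> real \<Rightarrow> real \<Rightarrow> nat \<Rightarrow> complex" where
  "colour_coeff p q r j = complex_of_real (if j = 1 then p else if j = 2 then q else r)"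

lemma norm_colour_coeff_le: "cmod (colour_coeff p q r j) \<le> \<bar>p\<bar> + \<bar>q\<bar> + \<bar>r\<bar>"
  by (simp add: colour_coeff_def)

locale boundary_data =
  fixes Cr :: "region \<Rightarrow> nat" and Ce :: "region set \<Rightarrow> nat" and p q r s :: real
    and lam :: complex and c :: "int \<Rightarrow> complex" and M m :: real
  assumes coloring: "valid_coloring Cr Ce"
    and norm_lam: "cmod lam \<le> 2"
    and M_ge: "3 + \<bar>p\<bar> + \<bar>q\<bar> + \<bar>r\<bar> \<le> M"
    and m_pos: "0 < m"
    and chain_edge: "\<And>k. c (k + 1) + c (k - 1) = colour_coeff p q r (Cr (k + 1, 1)) - lam * c k"
    and chain_vertex: "\<And>k. lam\<^sup>2 + (c k)\<^sup>2 + (c (k + 1))\<^sup>2 + lam * c k * c (k + 1) =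
        colour_coeff p q r (Cr (1, 0)) * lam + colour_coeff p q r (Cr (k, 1)) * c k
        + colour_coeff p q r (Cr (k + 1, 1)) * c (k + 1) + complex_of_real s"
    and chain_growth: "\<And>k. M \<le> cmod (c k) \<and> m * (of_int \<bar>k\<bar> + 1) \<le> cmod (c k)"
begin

definition coeff :: "region \<Rightarrow> complex" where
  "coeff w = colour_coeff p q r (Cr w)"

abbreviation phi :: "region \<Rightarrow> complex" where
  "phi \<equiv> farey_ext coeff lam c"

abbreviation vertex :: "region \<Rightarrow> region \<Rightarrow> region \<Rightarrow> bool" where
  "vertex \<equiv> vertex_rel coeff (complex_of_real s) phi"

lemma edge_colours: "edge_rel e X Y Z W \<Longrightarrow> Cr Z = Ce e \<and> Cr W = Ce e"
  using coloring unfolding valid_coloring_def by metis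

lemma coeff_rsub_eq_coeff_radd:
  assumes "X \<in> Omega" "Y \<in> Omega" "adj X Y"
  shows "coeff (rsub X Y) = coeff (radd X Y)"
proof -
  have "edge_rel {X, Y} X Y (radd X Y) (rsub X Y)" using assms by (simp add: edge_rel_def)
  then show ?thesis using edge_colours by (simp add: coeff_def)
qed

lemma phi_edge:
  assumes "X \<in> Omega" "Y \<in> Omega" "adj X Y"
  shows "phi (radd X Y) + phi (rsub X Y) = coeff (radd X Y) - phi X * phi Y"
proof -
  have infinity:
    "phi (radd (1, 0) Y) + phi (rsub (1, 0) Y) = coeff (radd (1, 0) Y) - phi (1, 0) * phi Y"
    if Y: "Y \<in> Omega" "adj (1, 0) Y" for Y
  proof -
    obtain k where "Y = (k, 1)" using adj_infinity[OF Y] by (metis prod.collapse)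
    then show ?thesis using chain_edge[of k]
      by (simp add: radd_infinity rsub_infinity farey_ext_infinity farey_ext_integer coeff_def)
  qed
  consider "X = (1, 0)" | "Y = (1, 0)" | "1 \<le> snd X" "1 \<le> snd Y"
    using Omega_snd_pos assms by blast
  then show ?thesis
  proof cases
    case 1
    then show ?thesis using infinity assms by simp
  next
    case 2
    then show ?thesis using infinity[of X] assms by (simp add: adj_sym radd_comm rsub_comm mult.commute)
  next
    case 3
    then show ?thesis using farey_ext_farey_parents[of "radd X Y" X Y] farey_parents_radd[OF assms]
      by simp
  qed
qed

lemma vertex_radd_iff_vertex_rsub:
  assumes "X \<in> Omega" "Y \<in> Omega" "adj X Y"
  shows "vertex X Y (radd X Y) \<longleftrightarrow> vertex X Y (rsub X Y)"
  using assms by (intro vertex_rel_flip phi_edge coeff_rsub_eq_coeff_radd)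

lemma vertex_infinity: "vertex (1, 0) (k, 1) (k + 1, 1)"
  using chain_vertex[of k]
  by (simp add: vertex_rel_def farey_ext_infinity farey_ext_integer coeff_def algebra_simps)

lemma vertex_radd:
  "X \<in> Omega \<Longrightarrow> Y \<in> Omega \<Longrightarrow> adj X Y \<Longrightarrow> vertex X Y (radd X Y)"
proof (induction "nat (snd X + snd Y)" arbitrary: X Y rule: less_induct)
  case less
  consider "X = (1, 0)" | "Y = (1, 0)" | "1 \<le> snd X" "1 \<le> snd Y"
    using Omega_snd_pos less.prems by blast
  then show ?case
  proof cases
    case 1
    then obtain k where "Y = (k, 1)" using adj_infinity less.prems by (metis prod.collapse)
    then show ?thesis using 1 vertex_infinity by (simp add: radd_infinity)
  next
    case 2
    then obtain k where "X = (k, 1)" using adj_infinity less.prems by (metis adj_sym prod.collapse)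
    then show ?thesis using 2 vertex_infinity[of k] vertex_rel_swap12 by (metis radd_comm radd_infinity)
  next
    case 3
    note perm = vertex_rel_swap12 vertex_rel_swap23
    from less.prems 3 have "vertex X Y (rsub X Y)"
    proof (cases rule: rsub_cases)
      case (1 k)
      then show ?thesis using vertex_infinity[of k] perm by metis
    next
      case 2
      then have "vertex Y (rsub X Y) X"
        using less.hyps[of Y "rsub X Y"] radd_farey_parents[OF 2]
        by (auto simp: farey_parents_def)
      then show ?thesis using perm by metis
    next
      case 3
      then have "vertex X (rsub X Y) Y"
        using less.hyps[of X "rsub X Y"] radd_farey_parents[OF 3]
        by (auto simp: farey_parents_def)
      then show ?thesis using perm by metis
    qed
    then show ?thesis using vertex_radd_iff_vertex_rsub less.prems by blast
  qed
qed

lemma vertex_rsub: "X \<in> Omega \<Longrightarrow> Y \<in> Omega \<Longrightarrow> adj X Y \<Longrightarrow> vertex X Y (rsub X Y)"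
  using vertex_radd vertex_radd_iff_vertex_rsub by blast

lemma markoff_map_phi: "markoff_map Cr Ce p q r s phi"
proof -
  have vertex: "vertex X Y Z" if "at_vertex X Y Z" for X Y Z
    using that vertex_radd vertex_rsub unfolding at_vertex_def edge_rel_def by metis
  have edge: "phi Z + phi W = colour_coeff p q r (Ce e) - phi X * phi Y"
    if "edge_rel e X Y Z W" for e X Y Z W
  proof -
    have "Cr Z = Ce e" using edge_colours[OF that] by simp
    then show ?thesis using that phi_edge by (auto simp: edge_rel_def coeff_def)
  qed
  show ?thesis
    unfolding markoff_map_def
    using vertex edge by (auto simp: vertex_rel_def coeff_def colour_coeff_def algebra_simps)
qed

section \<open>Growth of the extension\<close>

lemma norm_phi_parents_le:
  assumes w: "w \<in> Omega" and P: "farey_parents w X Y"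
    and X: "M \<le> cmod (phi X)" and Y: "M \<le> cmod (phi Y)"
    and W: "cmod (phi (rsub X Y)) \<le> max (cmod (phi X)) (cmod (phi Y))"
  shows "cmod (phi X) + cmod (phi Y) \<le> cmod (phi w)"
proof -
  have "cmod (coeff w) \<le> \<bar>p\<bar> + \<bar>q\<bar> + \<bar>r\<bar>" by (simp add: coeff_def norm_colour_coeff_le)
  then have "cmod (phi X) + cmod (phi Y) \<le> cmod (phi X * phi Y) - cmod (phi (rsub X Y)) - cmod (coeff w)"
    unfolding norm_mult using sum_le_prod_minus[OF X Y W] M_ge by simp
  also have "\<dots> \<le> cmod (phi X * phi Y + phi (rsub X Y) - coeff w)"
    by (rule norm_add_diff_ge)
  also have "\<dots> = cmod (phi w)"
    unfolding farey_ext_farey_parents[OF w P] by (simp add: norm_minus_commute algebra_simps)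
  finally show ?thesis .
qed

definition dominates_parents :: "region \<Rightarrow> bool" where
  "dominates_parents w \<longleftrightarrow>
     (\<forall>X Y. farey_parents w X Y \<longrightarrow> cmod (phi X) + cmod (phi Y) \<le> cmod (phi w))"

lemma norm_phi_rsub_le:
  assumes "X \<in> Omega" "Y \<in> Omega" "adj X Y" "1 \<le> snd X" "1 \<le> snd Y"
    and "M \<le> cmod (phi X)" "dominates_parents X" "dominates_parents Y"
  shows "cmod (phi (rsub X Y)) \<le> max (cmod (phi X)) (cmod (phi Y))"
  using assms(1-5)
proof (cases rule: rsub_cases)
  case 1
  then show ?thesis using norm_lam M_ge assms(6) by (simp add: farey_ext_infinity)
next
  case 2
  then have "cmod (phi Y) + cmod (phi (rsub X Y)) \<le> cmod (phi X)"
    using assms(7) unfolding dominates_parents_def by blast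
  then show ?thesis using norm_ge_zero[of "phi Y"] by linarith
next
  case 3
  then have "cmod (phi X) + cmod (phi (rsub X Y)) \<le> cmod (phi Y)"
    using assms(8) unfolding dominates_parents_def by blast
  then show ?thesis using norm_ge_zero[of "phi X"] by linarith
qed

lemma norm_phi_ge_M:
  assumes "w \<in> Omega" "1 \<le> snd w"
  shows "M \<le> cmod (phi w) \<and> dominates_parents w"
  using assms
proof (induction w rule: farey_parents_induct)
  case (integer k)
  have "\<not> farey_parents (k, 1) X Y" for X Y by (auto simp: farey_parents_def)
  then show ?case using chain_growth[of k] by (simp add: farey_ext_integer dominates_parents_def)
next
  case (parents w)
  have dominates: "cmod (phi X) + cmod (phi Y) \<le> cmod (phi w)" if P: "farey_parents w X Y" for X Y
  proof (rule norm_phi_parents_le[OF parents.hyps(1) P])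
    show X: "M \<le> cmod (phi X)" and "M \<le> cmod (phi Y)"
      using parents.IH P farey_parents_sym by blast+
    from P have "X \<in> Omega" "Y \<in> Omega" "adj X Y" "1 \<le> snd X" "1 \<le> snd Y"
      by (simp_all add: farey_parents_def)
    then show "cmod (phi (rsub X Y)) \<le> max (cmod (phi X)) (cmod (phi Y))"
      using norm_phi_rsub_le X parents.IH P farey_parents_sym by blast
  qed
  obtain X Y where P: "farey_parents w X Y" using farey_parents_exist parents.hyps by blast
  have "M \<le> cmod (phi X)" using parents.IH P by blast
  then have "M \<le> cmod (phi w)" using dominates[OF P] norm_ge_zero[of "phi Y"] by linarith
  then show ?case using dominates by (simp add: dominates_parents_def)
qed

lemma norm_phi_ge_linear:
  assumes "w \<in> Omega" "1 \<le> snd w"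
  shows "m * of_int (\<bar>fst w\<bar> + snd w) \<le> cmod (phi w)"
  using assms
proof (induction w rule: farey_parents_induct)
  case (integer k)
  then show ?case using chain_growth[of k] by (simp add: farey_ext_integer)
next
  case (parents w)
  obtain X Y where P: "farey_parents w X Y" using farey_parents_exist parents.hyps by blast
  have "m * of_int (\<bar>fst X\<bar> + snd X) \<le> cmod (phi X)" "m * of_int (\<bar>fst Y\<bar> + snd Y) \<le> cmod (phi Y)"
    using parents.IH P farey_parents_sym by blast+
  moreover have "dominates_parents w" using norm_phi_ge_M[of w] parents.hyps by simp
  then have "cmod (phi X) + cmod (phi Y) \<le> cmod (phi w)"
    using P unfolding dominates_parents_def by blast
  moreover have "\<bar>fst w\<bar> + snd w \<le> (\<bar>fst X\<bar> + snd X) + (\<bar>fst Y\<bar> + snd Y)"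
    using P by (auto simp: farey_parents_def)
  then have "m * of_int (\<bar>fst w\<bar> + snd w) \<le> m * of_int ((\<bar>fst X\<bar> + snd X) + (\<bar>fst Y\<bar> + snd Y))"
    using m_pos by (intro mult_left_mono) simp_all
  then have "m * of_int (\<bar>fst w\<bar> + snd w) \<le> m * of_int (\<bar>fst X\<bar> + snd X) + m * of_int (\<bar>fst Y\<bar> + snd Y)"
    by (simp only: of_int_add distrib_left)
  ultimately show ?case by linarith
qed

lemma finite_small_values: "finite {X \<in> Omega. cmod (phi X) \<le> B}"
proof -
  define N where "N = \<lceil>B / m\<rceil>"
  have "{X \<in> Omega. cmod (phi X) \<le> B} \<subseteq> insert (1, 0) ({-N..N} \<times> {-N..N})"
  proof
    fix X assume "X \<in> {X \<in> Omega. cmod (phi X) \<le> B}"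
    then have X: "X \<in> Omega" "cmod (phi X) \<le> B" by auto
    show "X \<in> insert (1, 0) ({-N..N} \<times> {-N..N})"
    proof (cases "X = (1, 0)")
      case False
      then have "1 \<le> snd X" using Omega_snd_pos X by blast
      then have "m * of_int (\<bar>fst X\<bar> + snd X) \<le> B" using norm_phi_ge_linear[OF X(1)] X(2) by linarith
      then have "of_int (\<bar>fst X\<bar> + snd X) \<le> B / m" using m_pos by (simp add: pos_le_divide_eq mult.commute)
      then have "\<bar>fst X\<bar> + snd X \<le> N" unfolding N_def by linarith
      then show ?thesis using \<open>1 \<le> snd X\<close> by (cases X) auto
    qed simp
  qed
  then show ?thesis by (rule finite_subset) simp
qed

end

section \<open>Boundary chains\<close>

definition alt :: "'a \<Rightarrow> 'a \<Rightarrow> int \<Rightarrow> 'a" where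
  "alt a b k = (if even k then a else b)"

lemma alt_sign_succ:
  fixes \<sigma> :: "'a::comm_ring_1"
  assumes "\<sigma>\<^sup>2 = 1"
  shows "alt 1 \<sigma> (k + 1) = \<sigma> * alt 1 \<sigma> k" "alt 1 \<sigma> (k - 1) = \<sigma> * alt 1 \<sigma> k"
  using assms by (simp_all add: alt_def power2_eq_square)

lemma alt_sign_sq: "\<sigma>\<^sup>2 = 1 \<Longrightarrow> (alt 1 \<sigma> k)\<^sup>2 = (1 :: 'a::comm_ring_1)"
  by (simp add: alt_def)

lemma norm_alt_sign: "cmod \<sigma> = 1 \<Longrightarrow> cmod (alt 1 \<sigma> k) = 1"
  by (simp add: alt_def)

lemma alt_neg_one:
  "alt 1 (-1) (k + 1) = - alt 1 (-1 :: 'a::comm_ring_1) k"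
  "alt 1 (-1) (k - 1) = - alt 1 (-1 :: 'a::comm_ring_1) k"
  "(alt 1 (-1) k)\<^sup>2 = (1 :: 'a::comm_ring_1)"
  by (simp_all add: alt_def)

definition line_point :: "real \<Rightarrow> int \<Rightarrow> complex" where
  "line_point T k = of_int k - \<i> * complex_of_real T"

lemma line_point_succ: "line_point T (k + 1) = line_point T k + 1"
  and line_point_pred: "line_point T (k - 1) = line_point T k - 1"
  by (simp_all add: line_point_def)

lemma norm_line_point_sq: "(cmod (line_point T k))\<^sup>2 = (of_int k)\<^sup>2 + T\<^sup>2"
  by (simp add: line_point_def cmod_power2)

lemma norm_line_point_ge: "\<bar>of_int k\<bar> \<le> cmod (line_point T k)" "\<bar>T\<bar> \<le> cmod (line_point T k)"
  using abs_Re_le_cmod[of "line_point T k"] abs_Im_le_cmod[of "line_point T k"] by (simp_all add: line_point_def)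

definition admissible_chain ::
  "complex \<Rightarrow> complex \<Rightarrow> complex \<Rightarrow> complex \<Rightarrow> real \<Rightarrow> complex \<Rightarrow> (int \<Rightarrow> complex) \<Rightarrow> real \<Rightarrow> bool"
  where
  "admissible_chain ev od io s M lam c m \<longleftrightarrow> cmod lam \<le> 2 \<and> 0 < m \<and>
     (\<forall>k. c (k + 1) + c (k - 1) = alt ev od (k + 1) - lam * c k) \<and>
     (\<forall>k. lam\<^sup>2 + (c k)\<^sup>2 + (c (k + 1))\<^sup>2 + lam * c k * c (k + 1) =
          io * lam + alt ev od k * c k + alt ev od (k + 1) * c (k + 1) + s) \<and>
     (\<forall>k. M \<le> cmod (c k) \<and> m * (of_int \<bar>k\<bar> + 1) \<le> cmod (c k))"

lemma quadratic_growth: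
  fixes a M x :: real
  assumes "0 < a" "1 \<le> M" "a * (of_int k)\<^sup>2 + M \<le> x"
  shows "M \<le> x \<and> min a 1 * (of_int \<bar>k\<bar> + 1) \<le> x"
proof -
  have "\<bar>of_int k\<bar> \<le> (of_int k :: real)\<^sup>2"
  proof (cases "k = 0")
    case False
    then have "1 \<le> \<bar>of_int k :: real\<bar>" by linarith
    then have "\<bar>of_int k\<bar> * 1 \<le> \<bar>of_int k :: real\<bar> * \<bar>of_int k\<bar>" by (intro mult_left_mono) auto
    then show ?thesis by (simp add: power2_eq_square)
  qed simp
  then have "min a 1 * \<bar>of_int k\<bar> \<le> a * (of_int k)\<^sup>2"
    using assms(1) by (intro mult_mono) auto
  moreover have "min a 1 \<le> M" using assms(2) by linarith
  moreover have "0 \<le> a * (of_int k)\<^sup>2" using assms(1) by simp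
  ultimately show ?thesis using assms(3) by (simp add: algebra_simps)
qed

text \<open>The three chains below are explicit solutions of the recurrence
  \<open>c (k + 1) + c (k - 1) = alt ev od (k + 1) - lam * c k\<close> with \<open>lam = \<plusminus>2\<close>, polynomial
  in \<open>line_point T k\<close>; the constant \<open>E\<close> resp. \<open>B\<close> is chosen so that the vertex relation
  holds, and a large imaginary offset \<open>T\<close> makes \<open>cmod (c k) \<ge> M\<close> for all \<open>k\<close>.\<close>

lemma admissible_chain_quadratic:
  assumes "ev + od \<noteq> 0" "1 \<le> M"
  shows "\<exists>c m. admissible_chain ev od io s M (-2) c m"
proof -
  define A where "A = (ev + od) / 4"
  define B where "B = (ev - od) / 8"
  define E where "E = (s - 4 - 2 * io + A\<^sup>2 + 4 * B\<^sup>2) / (4 * A)"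
  define T where "T = sqrt ((cmod E + cmod B + M) / cmod A)"
  define c where "c k = A * (line_point T k)\<^sup>2 + B * alt 1 (-1) k - E" for k
  have A: "A \<noteq> 0" using assms(1) by (simp add: A_def)
  have AE: "4 * A * E = s - 4 - 2 * io + A\<^sup>2 + 4 * B\<^sup>2" using A by (simp add: E_def)
  have D: "alt ev od k = 2 * A + 4 * B * alt 1 (-1) k" for k
    by (simp add: alt_def A_def B_def field_simps)
  note sign = alt_neg_one[where 'a = complex]
  have edge: "c (k + 1) + c (k - 1) = alt ev od (k + 1) - (-2) * c k" for k
    unfolding c_def D line_point_succ line_point_pred sign by algebra
  have vertex: "(-2)\<^sup>2 + (c k)\<^sup>2 + (c (k + 1))\<^sup>2 + (-2) * c k * c (k + 1) =
      io * (-2) + alt ev od k * c k + alt ev od (k + 1) * c (k + 1) + s" for k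
    unfolding c_def D line_point_succ sign(1) using AE sign(3)[of k] by algebra
  have growth: "M \<le> cmod (c k) \<and> min (cmod A) 1 * (of_int \<bar>k\<bar> + 1) \<le> cmod (c k)" for k
  proof (rule quadratic_growth)
    have "cmod A * T\<^sup>2 = cmod E + cmod B + M" using A assms(2) by (simp add: T_def)
    then have "cmod A * (cmod (line_point T k))\<^sup>2 = cmod A * (of_int k)\<^sup>2 + (cmod E + cmod B + M)"
      by (simp add: norm_line_point_sq algebra_simps)
    then have "cmod A * (of_int k)\<^sup>2 + M \<le> cmod (A * (line_point T k)\<^sup>2) - cmod (B * alt 1 (-1) k) - cmod E"
      by (simp add: norm_mult norm_power norm_alt_sign)
    also have "\<dots> \<le> cmod (c k)" unfolding c_def by (rule norm_add_diff_ge)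
    finally show "cmod A * (of_int k)\<^sup>2 + M \<le> cmod (c k)" .
  qed (use A assms(2) in simp_all)
  have "admissible_chain ev od io s M (-2) c (min (cmod A) 1)"
    unfolding admissible_chain_def using edge vertex growth A by simp
  then show ?thesis by blast
qed

lemma admissible_chain_quadratic_alternating:
  assumes "ev + od = 0" "ev \<noteq> 0" "1 \<le> M"
  shows "\<exists>c m. admissible_chain ev od io s M 2 c m"
proof -
  define A where "A = ev / 2"
  define E where "E = (s - 4 + 2 * io + A\<^sup>2) / (4 * A)"
  define T where "T = sqrt ((cmod E + M) / cmod A)"
  define c where "c k = alt 1 (-1) k * (A * (line_point T k)\<^sup>2 - E)" for k
  have A: "A \<noteq> 0" using assms(2) by (simp add: A_def)
  have AE: "4 * A * E = s - 4 + 2 * io + A\<^sup>2" using A by (simp add: E_def)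
  have D: "alt ev od k = 2 * A * alt 1 (-1) k" for k
    using assms(1) by (simp add: alt_def A_def add_eq_0_iff)
  note sign = alt_neg_one[where 'a = complex]
  have edge: "c (k + 1) + c (k - 1) = alt ev od (k + 1) - 2 * c k" for k
    unfolding c_def D line_point_succ line_point_pred sign by algebra
  have vertex: "2\<^sup>2 + (c k)\<^sup>2 + (c (k + 1))\<^sup>2 + 2 * c k * c (k + 1) =
      io * 2 + alt ev od k * c k + alt ev od (k + 1) * c (k + 1) + s" for k
    unfolding c_def D line_point_succ sign(1) using AE sign(3)[of k] by algebra
  have growth: "M \<le> cmod (c k) \<and> min (cmod A) 1 * (of_int \<bar>k\<bar> + 1) \<le> cmod (c k)" for k
  proof (rule quadratic_growth)
    have "cmod A * T\<^sup>2 = cmod E + M" using A assms(3) by (simp add: T_def)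
    then have "cmod A * (of_int k)\<^sup>2 + M \<le> cmod (A * (line_point T k)\<^sup>2) - cmod E"
      by (simp add: norm_mult norm_power norm_line_point_sq algebra_simps)
    also have "\<dots> \<le> cmod (A * (line_point T k)\<^sup>2 - E)" by (rule norm_triangle_ineq2)
    also have "\<dots> = cmod (c k)" by (simp add: c_def norm_mult norm_alt_sign)
    finally show "cmod A * (of_int k)\<^sup>2 + M \<le> cmod (c k)" .
  qed (use A assms(3) in simp_all)
  have "admissible_chain ev od io s M 2 c (min (cmod A) 1)"
    unfolding admissible_chain_def using edge vertex growth A by simp
  then show ?thesis by blast
qed

lemma admissible_chain_linear:
  assumes "\<sigma> = 1 \<or> \<sigma> = -1" "s - 4 - 2 * \<sigma> * io \<noteq> 0" "1 \<le> M"
  shows "\<exists>c m. admissible_chain 0 0 io s M (- 2 * \<sigma>) c m"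
proof -
  define B where "B = csqrt (s - 4 - 2 * \<sigma> * io)"
  define T where "T = M / cmod B"
  define c where "c k = alt 1 \<sigma> k * B * line_point T k" for k
  have B: "B \<noteq> 0" using assms(2) by (simp add: B_def)
  have B2: "B\<^sup>2 = s - 4 - 2 * \<sigma> * io" by (simp add: B_def)
  have \<sigma>: "\<sigma>\<^sup>2 = 1" "cmod \<sigma> = 1" using assms(1) by auto
  note sign = alt_sign_succ[OF \<sigma>(1)] alt_sign_sq[OF \<sigma>(1)]
  have zero: "alt 0 0 k = (0 :: complex)" for k by (simp add: alt_def)
  have edge: "c (k + 1) + c (k - 1) = alt 0 0 (k + 1) - (- 2 * \<sigma>) * c k" for k
    unfolding c_def zero line_point_succ line_point_pred sign(1,2) by (simp add: algebra_simps)
  have vertex: "(- 2 * \<sigma>)\<^sup>2 + (c k)\<^sup>2 + (c (k + 1))\<^sup>2 + (- 2 * \<sigma>) * c k * c (k + 1) =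
      io * (- 2 * \<sigma>) + alt 0 0 k * c k + alt 0 0 (k + 1) * c (k + 1) + s" for k
    unfolding c_def zero line_point_succ sign(1) using B2 \<sigma>(1) sign(3)[of k] by algebra
  have growth: "M \<le> cmod (c k) \<and> min (cmod B) 1 / 2 * (of_int \<bar>k\<bar> + 1) \<le> cmod (c k)" for k
  proof -
    have norm_c: "cmod (c k) = cmod B * cmod (line_point T k)" by (simp add: c_def norm_mult norm_alt_sign \<sigma>)
    have "M = cmod B * T" using B by (simp add: T_def)
    also have "\<dots> \<le> cmod (c k)"
      unfolding norm_c using norm_line_point_ge(2)[of T k] by (intro mult_left_mono) auto
    finally have "M \<le> cmod (c k)" .
    moreover have "cmod B * \<bar>of_int k\<bar> \<le> cmod (c k)"
      unfolding norm_c using norm_line_point_ge(1)[of k T] by (intro mult_left_mono) auto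
    moreover have "min (cmod B) 1 / 2 * \<bar>of_int k\<bar> \<le> cmod B / 2 * \<bar>of_int k\<bar>"
      by (intro mult_right_mono) auto
    ultimately show ?thesis using assms(3) by (simp add: algebra_simps)
  qed
  have "cmod (- 2 * \<sigma>) \<le> 2" by (simp add: norm_mult \<sigma>)
  then have "admissible_chain 0 0 io s M (- 2 * \<sigma>) c (min (cmod B) 1 / 2)"
    unfolding admissible_chain_def using edge vertex growth B by simp
  then show ?thesis by blast
qed

lemma admissible_chain_exists:
  assumes "\<not> (ev = 0 \<and> od = 0 \<and> io = 0)" "1 \<le> M"
  shows "\<exists>lam c m. admissible_chain ev od io s M lam c m"
proof -
  consider "ev + od \<noteq> 0" | "ev + od = 0" "ev \<noteq> 0" | "ev = 0" "od = 0" "io \<noteq> 0"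
    using assms(1) by force
  then show ?thesis
  proof cases
    case 1
    then show ?thesis using admissible_chain_quadratic assms(2) by blast
  next
    case 2
    then show ?thesis using admissible_chain_quadratic_alternating assms(2) by blast
  next
    case 3
    then have "s - 4 - 2 * 1 * io \<noteq> 0 \<or> s - 4 - 2 * (-1) * io \<noteq> 0" by auto
    then show ?thesis using admissible_chain_linear[of 1] admissible_chain_linear[of "-1"] 3 assms(2)
      by blast
  qed
qed

section \<open>Colours around infinity\<close>

lemma colour_integer_period:
  assumes "valid_coloring Cr Ce"
  shows "Cr (k + 2, 1) = Cr (k, 1)"
proof -
  have "edge_rel {(1, 0), (k + 1, 1)} (1, 0) (k + 1, 1) (k + 2, 1) (k, 1)"
    using radd_infinity[of "k + 1"] rsub_infinity[of "k + 1"]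
    by (simp add: edge_rel_def infinity_in_Omega integer_in_Omega adj_def add.assoc)
  then show ?thesis using assms unfolding valid_coloring_def by metis
qed

lemma colour_integer_parity:
  assumes "valid_coloring Cr Ce"
  shows "Cr (k, 1) = alt (Cr (0, 1)) (Cr (1, 1)) k"
proof -
  have "Cr (k mod 2 + 2 * n, 1) = Cr (k mod 2, 1)" for n
  proof (induction n rule: int_induct[where k = 0])
    case (step1 n)
    then show ?case using colour_integer_period[OF assms, of "k mod 2 + 2 * n"]
      by (simp add: algebra_simps)
  next
    case (step2 n)
    then show ?case using colour_integer_period[OF assms, of "k mod 2 + 2 * (n - 1)"]
      by (simp add: algebra_simps)
  qed simp
  from this[of "k div 2"] show ?thesis
    by (auto simp: alt_def even_iff_mod_2_eq_zero odd_iff_mod_2_eq_one)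
qed

lemma colours_around_infinity:
  assumes "valid_coloring Cr Ce"
  shows "{Cr (0, 1), Cr (1, 1), Cr (1, 0)} = {1, 2, 3}"
proof -
  have "edge_rel {(1, 0), (0, 1)} (1, 0) (0, 1) (1, 1) (-1, 1)"
    by (simp add: edge_rel_def Omega_iff adj_def radd_def rsub_def normr_def)
  then have "Cr (1, 0) \<noteq> Cr (0, 1)" "Cr (1, 1) \<noteq> Cr (1, 0)" "Cr (1, 1) \<noteq> Cr (0, 1)"
    using assms unfolding valid_coloring_def by metis+
  moreover have "Cr (1, 0) \<in> {1, 2, 3}" "Cr (0, 1) \<in> {1, 2, 3}" "Cr (1, 1) \<in> {1, 2, 3}"
    using assms by (simp_all add: valid_coloring_def Omega_iff)
  ultimately show ?thesis by auto
qed

lemma colour_coeffs_nonzero: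
  assumes "{i, j, l} = {1, 2, 3}" "(p, q, r) \<noteq> (0, 0, 0)"
  shows "\<not> (colour_coeff p q r i = 0 \<and> colour_coeff p q r j = 0 \<and> colour_coeff p q r l = 0)"
proof
  assume "colour_coeff p q r i = 0 \<and> colour_coeff p q r j = 0 \<and> colour_coeff p q r l = 0"
  then have "colour_coeff p q r n = 0" if "n \<in> {i, j, l}" for n using that by auto
  then have "colour_coeff p q r n = 0" if "n \<in> {1, 2, 3}" for n using that assms(1) by simp
  then have "colour_coeff p q r 1 = 0" "colour_coeff p q r 2 = 0" "colour_coeff p q r 3 = 0" by simp_all
  then show False using assms(2) by (simp add: colour_coeff_def)
qed

lemma exists_boundary_data:
  assumes coloring: "valid_coloring Cr Ce" and "(p, q, r) \<noteq> (0, 0, 0)"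
  shows "\<exists>lam c m. boundary_data Cr Ce p q r s lam c (3 + \<bar>p\<bar> + \<bar>q\<bar> + \<bar>r\<bar>) m"
proof -
  have "1 \<le> 3 + \<bar>p\<bar> + \<bar>q\<bar> + \<bar>r\<bar>" by simp
  then obtain lam c m where chain:
    "admissible_chain (colour_coeff p q r (Cr (0, 1))) (colour_coeff p q r (Cr (1, 1)))
       (colour_coeff p q r (Cr (1, 0))) s (3 + \<bar>p\<bar> + \<bar>q\<bar> + \<bar>r\<bar>) lam c m"
    using admissible_chain_exists colour_coeffs_nonzero[OF colours_around_infinity[OF coloring] assms(2)]
    by blast
  have parity: "alt (colour_coeff p q r (Cr (0, 1))) (colour_coeff p q r (Cr (1, 1))) k =
      colour_coeff p q r (Cr (k, 1))" for k
    unfolding colour_integer_parity[OF coloring, of k] by (simp add: alt_def)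
  have "boundary_data Cr Ce p q r s lam c (3 + \<bar>p\<bar> + \<bar>q\<bar> + \<bar>r\<bar>) m"
    using chain coloring unfolding boundary_data_def admissible_chain_def parity by simp
  then show ?thesis by blast
qed

theorem lemma5p2:
  fixes p q r s :: real and Cr :: "region \<Rightarrow> nat" and Ce :: "region set \<Rightarrow> nat"
  assumes "valid_coloring Cr Ce"
    and "(p, q, r) \<noteq> (0, 0, 0)"
  shows "\<exists>\<phi>. markoff_map Cr Ce (complex_of_real p) (complex_of_real q) (complex_of_real r)
               (complex_of_real s) \<phi> \<and>
             finite {X \<in> Omega. cmod (\<phi> X) \<le> 2 + max (max \<bar>p\<bar> \<bar>q\<bar>) \<bar>r\<bar> / 2}"
proof -
  obtain lam c m where "boundary_data Cr Ce p q r s lam c (3 + \<bar>p\<bar> + \<bar>q\<bar> + \<bar>r\<bar>) m"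
    using exists_boundary_data[OF assms] by blast
  then interpret boundary_data Cr Ce p q r s lam c "3 + \<bar>p\<bar> + \<bar>q\<bar> + \<bar>r\<bar>" m .
  show ?thesis using markoff_map_phi finite_small_values by blast
qed

end
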